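(* Let $(X,Y)\sim p_{XY}$ be jointly distributed finite-valued random variables. Then $p_{XY}$ is saturable, i.e. $I(X;Y|Q_* )=0$, iff there exists a conditional pmf $p_{Q|XY}$ (with $Q$ finite-valued) such that $X-Q-Y$, $Q-X-Y$ and $Q-Y-X$ are all Markov chains.
   Context: For finite-valued random variables, $A-B-C$ means that $A$ and $C$ are conditionally independent given $B$. $Q_*$ is the maximal common random variable of $X$ and $Y$: consider the bipartite graph on vertex set $\mathcal{X}\cup\mathcal{Y}$ (disjoint union of the alphabets) with an edge between $x$ and $y$ iff $p_{XY}(x,y)>0$, and let $Q_*$ be the index of the connected component containing the realized pair $(X,Y)$. *)

theory Defs
  imports Complex_Main
begin

text \<open>A joint pmf of finitely many triples is given as a nonnegative function
  f :: 'a => 'b => 'c => real supported on finite sets A, B, C.\<close>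

definition is_pmf :: "('a \<times> 'b \<Rightarrow> real) \<Rightarrow> bool" where
  "is_pmf p \<longleftrightarrow> (\<forall>z. p z \<ge> 0) \<and> (\<Sum>z\<in>UNIV. p z) = 1"

text \<open>Markov chain A - B - C (conditional independence of A and C given B),
  for a joint pmf f a b c on A x B x C:  p(a,b,c) p(b) = p(a,b) p(b,c).\<close>
definition markov_chain ::
  "'a set \<Rightarrow> 'b set \<Rightarrow> 'c set \<Rightarrow> ('a \<Rightarrow> 'b \<Rightarrow> 'c \<Rightarrow> real) \<Rightarrow> bool" where
  "markov_chain A B C f \<longleftrightarrow>
     (\<forall>a\<in>A. \<forall>b\<in>B. \<forall>c\<in>C.
        f a b c * (\<Sum>a'\<in>A. \<Sum>c'\<in>C. f a' b c') =
        (\<Sum>c'\<in>C. f a b c') * (\<Sum>a'\<in>A. f a' b c))"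

definition cond_mutual_info ::
  "'a set \<Rightarrow> 'b set \<Rightarrow> 'c set \<Rightarrow> ('a \<Rightarrow> 'b \<Rightarrow> 'c \<Rightarrow> real) \<Rightarrow> real" where
  "cond_mutual_info A B C f =
     (\<Sum>a\<in>A. \<Sum>b\<in>B. \<Sum>c\<in>C.
        if f a b c > 0 then
          f a b c * ln (f a b c * (\<Sum>a'\<in>A. \<Sum>b'\<in>B. f a' b' c) /
                        ((\<Sum>b'\<in>B. f a b' c) * (\<Sum>a'\<in>A. f a' b c)))
        else 0)"

definition bip_edges :: "('x \<times> 'y \<Rightarrow> real) \<Rightarrow> (('x + 'y) \<times> ('x + 'y)) set" where
  "bip_edges p = {(Inl x, Inr y) | x y. p (x, y) > 0} \<union> {(Inr y, Inl x) | x y. p (x, y) > 0}"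

definition component :: "('x \<times> 'y \<Rightarrow> real) \<Rightarrow> ('x + 'y) \<Rightarrow> ('x + 'y) set" where
  "component p v = {w. (v, w) \<in> (bip_edges p)\<^sup>*}"

text \<open>Maximal common random variable: Q_* = the component containing the realized
  pair (X,Y); for p(x,y) > 0 this is the component of Inl x (= that of Inr y).\<close>
definition Qstar :: "('x \<times> 'y \<Rightarrow> real) \<Rightarrow> 'x \<Rightarrow> 'y \<Rightarrow> ('x + 'y) set" where
  "Qstar p x y = component p (Inl x)"

definition joint_Qstar :: "('x \<times> 'y \<Rightarrow> real) \<Rightarrow> 'x \<Rightarrow> 'y \<Rightarrow> ('x + 'y) set \<Rightarrow> real" where
  "joint_Qstar p x y c = (if c = Qstar p x y then p (x, y) else 0)"

definition saturable :: "('x::finite \<times> 'y::finite \<Rightarrow> real) \<Rightarrow> bool" where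
  "saturable p \<longleftrightarrow> cond_mutual_info UNIV UNIV UNIV (joint_Qstar p) = 0"

end

theory Submission
  imports Defs
begin

text \<open>
  By Gibbs' inequality, I(X;Y|Q) = 0 exactly when p(x,y,q) p(q) = p(x,q) p(y,q) everywhere, i.e. when
  X - Q - Y. So a saturable p_XY is witnessed by Q = Q_* itself; Q_* - X - Y and Q_* - Y - X hold
  because Q_* is a function of X and also, on the support, a function of Y.

  Conversely, Q - X - Y and Q - Y - X say that on the support p(q|x,y) depends only on x and only on y,
  hence is constant along the edges of the bipartite graph and so only depends on the component.
  Fix (x,y) with p(x,y) > 0, a q with p(q|x,y) > 0, and write D for the mass of the component C of
  (x,y). Then X - Q - Y at q, restricted to C, reads p(x',y') * c = p(x') p(y') for a constant c;
  summing over C gives c = D, which is exactly X - Q_* - Y at (x,y).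
\<close>

lemma mult_ln_ratio_ge_diff:
  fixes a b :: real
  assumes "0 < a" "0 < b"
  shows "a - b \<le> a * ln (a / b)"
proof -
  have "ln (b / a) \<le> b / a - 1"
    using assms by (intro ln_le_minus_one) simp
  then have "1 - b / a \<le> ln (a / b)"
    using assms by (simp add: ln_div)
  then have "a * (1 - b / a) \<le> a * ln (a / b)"
    using assms by (intro mult_left_mono) simp_all
  then show ?thesis
    using assms by (simp add: algebra_simps)
qed

lemma relative_entropy_eq_0_imp_eq:
  fixes f u :: "'s \<Rightarrow> real"
  assumes "finite S"
    and f_nonneg: "\<And>s. s \<in> S \<Longrightarrow> 0 \<le> f s" and u_nonneg: "\<And>s. s \<in> S \<Longrightarrow> 0 \<le> u s"
    and u_pos: "\<And>s. s \<in> S \<Longrightarrow> 0 < f s \<Longrightarrow> 0 < u s"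
    and mass: "sum f S = sum u S"
    and zero: "(\<Sum>s\<in>S. if 0 < f s then f s * ln (f s / u s) else 0) = 0"
    and "s \<in> S"
  shows "f s = u s"
proof -
  define d where "d s = (if 0 < f s then f s * ln (f s / u s) else 0) - (f s - u s)" for s
  have d_nonneg: "0 \<le> d s" if "s \<in> S" for s
    using mult_ln_ratio_ge_diff[of "f s" "u s"] f_nonneg[OF that] u_nonneg[OF that] u_pos[OF that]
    by (auto simp: d_def)
  have "sum d S = 0"
    using mass zero by (simp add: d_def sum_subtractf)
  then have d0: "d s = 0"
    using sum_nonneg_eq_0_iff[OF \<open>finite S\<close>] d_nonneg \<open>s \<in> S\<close> by blast
  show ?thesis
  proof (cases "0 < f s")
    case True
    with u_pos \<open>s \<in> S\<close> have "0 < u s" by blast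
    from d0 True have "f s * ln (f s / u s) = f s - u s"
      by (simp add: d_def)
    then have "ln (u s / f s) = u s / f s - 1"
      using True \<open>0 < u s\<close> by (simp add: ln_div field_simps)
    then have "u s / f s = 1"
      using True \<open>0 < u s\<close> by (intro ln_eq_minus_one) simp_all
    then show ?thesis using True by simp
  next
    case False
    then show ?thesis using d0 f_nonneg[OF \<open>s \<in> S\<close>] by (simp add: d_def)
  qed
qed

lemma sum_UNIV_triple:
  "(\<Sum>a\<in>(UNIV::'a::finite set). \<Sum>b\<in>(UNIV::'b::finite set). \<Sum>c\<in>(UNIV::'c::finite set). g a b c)
    = (\<Sum>(a, b, c)\<in>UNIV. g a b c)"
  by (simp add: sum.cartesian_product flip: UNIV_Times_UNIV)

lemma sum_product_of_conditionals:
  fixes f :: "'a::finite \<Rightarrow> 'b::finite \<Rightarrow> 'c::finite \<Rightarrow> real"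
  shows "(\<Sum>a\<in>UNIV. \<Sum>b\<in>UNIV. \<Sum>c\<in>UNIV.
      (\<Sum>b'\<in>UNIV. f a b' c) * (\<Sum>a'\<in>UNIV. f a' b c) / (\<Sum>a'\<in>UNIV. \<Sum>b'\<in>UNIV. f a' b' c)) =
    (\<Sum>a\<in>UNIV. \<Sum>b\<in>UNIV. \<Sum>c\<in>UNIV. f a b c)"
proof -
  have innermost_first: "(\<Sum>a\<in>UNIV. \<Sum>b\<in>UNIV. \<Sum>c\<in>UNIV. g a b c) =
      (\<Sum>c\<in>UNIV. \<Sum>a\<in>UNIV. \<Sum>b\<in>UNIV. g a b c)" for g :: "'a \<Rightarrow> 'b \<Rightarrow> 'c \<Rightarrow> real"
  proof -
    have "(\<Sum>a\<in>UNIV. \<Sum>b\<in>UNIV. \<Sum>c\<in>UNIV. g a b c) = (\<Sum>a\<in>UNIV. \<Sum>c\<in>UNIV. \<Sum>b\<in>UNIV. g a b c)"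
      by (rule sum.cong[OF refl], rule sum.swap)
    also have "\<dots> = (\<Sum>c\<in>UNIV. \<Sum>a\<in>UNIV. \<Sum>b\<in>UNIV. g a b c)"
      by (rule sum.swap)
    finally show ?thesis .
  qed
  have slice: "(\<Sum>a\<in>UNIV. \<Sum>b\<in>UNIV. (\<Sum>b'\<in>UNIV. f a b' c) * (\<Sum>a'\<in>UNIV. f a' b c) / M) =
      (\<Sum>a\<in>UNIV. \<Sum>b\<in>UNIV. f a b c) * (\<Sum>a\<in>UNIV. \<Sum>b\<in>UNIV. f a b c) / M" for c M
  proof -
    have "(\<Sum>a\<in>UNIV. \<Sum>b\<in>UNIV. (\<Sum>b'\<in>UNIV. f a b' c) * (\<Sum>a'\<in>UNIV. f a' b c) / M) =
        (\<Sum>a\<in>UNIV. \<Sum>b'\<in>UNIV. f a b' c) * (\<Sum>b\<in>UNIV. \<Sum>a'\<in>UNIV. f a' b c) / M"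
      unfolding sum_product sum_divide_distrib ..
    then show ?thesis
      by (simp only: sum.swap[of "\<lambda>b a'. f a' b c"])
  qed
  show ?thesis
    unfolding innermost_first slice by simp
qed

lemma markov_chain_if_cond_mutual_info_eq_0:
  fixes f :: "'a::finite \<Rightarrow> 'b::finite \<Rightarrow> 'c::finite \<Rightarrow> real"
  assumes nonneg: "\<And>a b c. 0 \<le> f a b c" and "cond_mutual_info UNIV UNIV UNIV f = 0"
  shows "markov_chain UNIV UNIV UNIV (\<lambda>a c b. f a b c)"
proof -
  define fC where "fC c = (\<Sum>a'\<in>UNIV. \<Sum>b'\<in>UNIV. f a' b' c)" for c
  define fA where "fA a c = (\<Sum>b'\<in>UNIV. f a b' c)" for a c
  define fB where "fB b c = (\<Sum>a'\<in>UNIV. f a' b c)" for b c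
  define F where "F s = (case s of (a, b, c) \<Rightarrow> f a b c)" for s
  \<comment> \<open>U is p(a|c) p(b|c) p(c), and I(A;B|C) is the relative entropy of F with respect to U.\<close>
  define U where "U s = (case s of (a, b, c) \<Rightarrow> fA a c * fB b c / fC c)" for s
  have fA_ge: "f a b c \<le> fA a c" for a b c
    unfolding fA_def by (rule member_le_sum) (simp_all add: nonneg)
  have fB_ge: "f a b c \<le> fB b c" for a b c
    unfolding fB_def by (rule member_le_sum[where f = "\<lambda>a'. f a' b c"]) (simp_all add: nonneg)
  have fC_ge: "fA a c \<le> fC c" for a c
    unfolding fC_def fA_def by (rule member_le_sum) (simp_all add: nonneg sum_nonneg)
  have fA_nonneg: "0 \<le> fA a c" and fB_nonneg: "0 \<le> fB b c" and fC_nonneg: "0 \<le> fC c" for a b c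
    using fA_ge fB_ge fC_ge nonneg order_trans by metis+
  have F_eq_U: "F s = U s" for s
  proof (rule relative_entropy_eq_0_imp_eq[where S = UNIV and f = F and u = U])
    show "0 \<le> F s" "0 \<le> U s" for s
      by (cases s; simp add: F_def U_def nonneg fA_nonneg fB_nonneg fC_nonneg)+
    show "0 < U s" if "0 < F s" for s
    proof (cases s)
      case (fields a b c)
      with that have "0 < f a b c" by (simp add: F_def)
      then have "0 < fA a c" "0 < fB b c" "0 < fC c"
        using fA_ge fB_ge fC_ge by (meson order_less_le_trans)+
      then show ?thesis by (simp add: fields U_def)
    qed
    show "sum F UNIV = sum U UNIV"
      using sum_product_of_conditionals[of f]
      by (simp add: F_def U_def fA_def fB_def fC_def sum_UNIV_triple)
    show "(\<Sum>s\<in>UNIV. if 0 < F s then F s * ln (F s / U s) else 0) = 0"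
      using assms(2)
      by (simp add: cond_mutual_info_def F_def U_def fA_def fB_def fC_def
          divide_divide_eq_right sum_UNIV_triple case_prod_unfold cong: if_cong)
  qed simp_all
  have "f a b c = fA a c * fB b c / fC c" for a b c
    using F_eq_U[of "(a, b, c)"] by (simp add: F_def U_def)
  then have "f a b c * fC c = fA a c * fB b c" for a b c
    using fC_ge[of a c] fA_nonneg[of a c] by (cases "fC c = 0") simp_all
  then show ?thesis
    by (simp add: markov_chain_def fA_def fB_def fC_def)
qed

lemma cond_mutual_info_eq_0_if_factorizes:
  fixes f :: "'a::finite \<Rightarrow> 'b::finite \<Rightarrow> 'c::finite \<Rightarrow> real"
  assumes "\<And>a b c. 0 < f a b c \<Longrightarrow>
    f a b c * (\<Sum>a'\<in>UNIV. \<Sum>b'\<in>UNIV. f a' b' c) = (\<Sum>b'\<in>UNIV. f a b' c) * (\<Sum>a'\<in>UNIV. f a' b c)"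
  shows "cond_mutual_info UNIV UNIV UNIV f = 0"
  unfolding cond_mutual_info_def
proof (intro sum.neutral ballI)
  fix a b c
  show "(if 0 < f a b c then f a b c * ln (f a b c * (\<Sum>a'\<in>UNIV. \<Sum>b'\<in>UNIV. f a' b' c) /
      ((\<Sum>b'\<in>UNIV. f a b' c) * (\<Sum>a'\<in>UNIV. f a' b c))) else 0) = 0"
  proof (cases "0 < f a b c")
    case True
    then show ?thesis
      using assms[OF True] by (cases "(\<Sum>b'\<in>UNIV. f a b' c) * (\<Sum>a'\<in>UNIV. f a' b c) = 0") auto
  qed simp
qed

lemma markov_chain_middle_slices:
  assumes "markov_chain A C D g"
    and "\<And>b. b \<in> B \<Longrightarrow> \<exists>c\<in>C. \<forall>a d. f a b d = g a c d"
  shows "markov_chain A B D f"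
  unfolding markov_chain_def
proof (intro ballI)
  fix a b d
  assume "a \<in> A" "b \<in> B" "d \<in> D"
  then obtain c where "c \<in> C" and slice: "\<And>a d. f a b d = g a c d"
    using assms(2) by blast
  show "f a b d * (\<Sum>a'\<in>A. \<Sum>d'\<in>D. f a' b d') = (\<Sum>d'\<in>D. f a b d') * (\<Sum>a'\<in>A. f a' b d)"
    using assms(1) \<open>a \<in> A\<close> \<open>c \<in> C\<close> \<open>d \<in> D\<close> by (simp add: slice markov_chain_def)
qed

lemma markov_chain_kernel_iff:
  fixes p :: "'a::finite \<times> 'b::finite \<Rightarrow> real" and W :: "'a \<Rightarrow> 'b \<Rightarrow> nat \<Rightarrow> real"
  assumes nonneg: "\<And>z. 0 \<le> p z" and total: "\<And>a b. (\<Sum>q<n. W a b q) = 1"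
  shows "markov_chain {..<n} UNIV UNIV (\<lambda>q a b. p (a, b) * W a b q) \<longleftrightarrow>
    (\<exists>A. \<forall>a b q. q < n \<longrightarrow> 0 < p (a, b) \<longrightarrow> W a b q = A a q)"
proof -
  define pa where "pa a = (\<Sum>b\<in>UNIV. p (a, b))" for a
  define s where "s a q = (\<Sum>b\<in>UNIV. p (a, b) * W a b q)" for a q
  have slice_total: "(\<Sum>q\<in>{..<n}. p (a, b) * W a b q) = p (a, b)" for a b
    by (simp add: total flip: sum_distrib_left)
  have "(\<Sum>q\<in>{..<n}. \<Sum>b\<in>UNIV. p (a, b) * W a b q) = pa a" for a
    by (subst sum.swap) (simp add: slice_total pa_def)
  then have markov_iff: "markov_chain {..<n} UNIV UNIV (\<lambda>q a b. p (a, b) * W a b q) \<longleftrightarrow>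
      (\<forall>q<n. \<forall>a b. p (a, b) * W a b q * pa a = s a q * p (a, b))"
    by (simp add: markov_chain_def slice_total s_def Ball_def)
  have pa_pos: "0 < pa a" if "0 < p (a, b)" for a b
    using that member_le_sum[of b UNIV "\<lambda>b. p (a, b)"] nonneg by (simp add: pa_def)
  show ?thesis
    unfolding markov_iff
  proof
    assume markov: "\<forall>q<n. \<forall>a b. p (a, b) * W a b q * pa a = s a q * p (a, b)"
    have "W a b q = s a q / pa a" if "q < n" "0 < p (a, b)" for a b q
    proof -
      have "p (a, b) * (W a b q * pa a) = p (a, b) * s a q"
        using markov that(1) by (simp add: ac_simps)
      then show ?thesis
        using that(2) pa_pos[OF that(2)] by (simp add: field_simps)
    qed
    then show "\<exists>A. \<forall>a b q. q < n \<longrightarrow> 0 < p (a, b) \<longrightarrow> W a b q = A a q"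
      by (intro exI[where x = "\<lambda>a q. s a q / pa a"]) simp
  next
    assume "\<exists>A. \<forall>a b q. q < n \<longrightarrow> 0 < p (a, b) \<longrightarrow> W a b q = A a q"
    then obtain A where A: "\<And>a b q. q < n \<Longrightarrow> 0 < p (a, b) \<Longrightarrow> W a b q = A a q"
      by blast
    have weighted: "p (a, b) * W a b q = p (a, b) * A a q" if "q < n" for a b q
      using A[OF that, of a b] nonneg[of "(a, b)"] by (cases "p (a, b) = 0") simp_all
    have s_eq: "s a q = pa a * A a q" if "q < n" for a q
      unfolding s_def pa_def sum_distrib_right weighted[OF that] ..
    show "\<forall>q<n. \<forall>a b. p (a, b) * W a b q * pa a = s a q * p (a, b)"
    proof (intro allI impI)
      fix q a b
      assume "q < n"
      have "p (a, b) * W a b q * pa a = p (a, b) * A a q * pa a"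
        by (simp add: weighted[OF \<open>q < n\<close>])
      also have "\<dots> = s a q * p (a, b)"
        by (simp add: s_eq[OF \<open>q < n\<close>] mult_ac)
      finally show "p (a, b) * W a b q * pa a = s a q * p (a, b)" .
    qed
  qed
qed

lemma markov_chain_kernel_swap_iff:
  fixes p :: "'a::finite \<times> 'b::finite \<Rightarrow> real" and W :: "'a \<Rightarrow> 'b \<Rightarrow> nat \<Rightarrow> real"
  assumes "\<And>z. 0 \<le> p z" and "\<And>a b. (\<Sum>q<n. W a b q) = 1"
  shows "markov_chain {..<n} UNIV UNIV (\<lambda>q b a. p (a, b) * W a b q) \<longleftrightarrow>
    (\<exists>B. \<forall>b a q. q < n \<longrightarrow> 0 < p (a, b) \<longrightarrow> W a b q = B b q)"
  using markov_chain_kernel_iff[where p = "\<lambda>(b, a). p (a, b)" and W = "\<lambda>b a. W a b" and n = n] assms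
  by (simp add: case_prod_beta)

lemma sym_bip_edges: "sym (bip_edges p)"
  unfolding sym_def bip_edges_def by blast

lemma component_eq_iff: "component p u = component p v \<longleftrightarrow> v \<in> component p u"
proof
  assume "component p u = component p v"
  then show "v \<in> component p u"
    by (simp add: component_def)
next
  assume "v \<in> component p u"
  then have "(u, v) \<in> (bip_edges p)\<^sup>*" "(v, u) \<in> (bip_edges p)\<^sup>*"
    using sym_rtrancl[OF sym_bip_edges] by (auto simp: component_def sym_def)
  then show "component p u = component p v"
    unfolding component_def by (auto intro: rtrancl_trans)
qed

lemma component_Inl_eq_Inr:
  assumes "0 < p (x, y)"
  shows "component p (Inl x) = component p (Inr y)"
proof -
  have "(Inl x, Inr y) \<in> bip_edges p"
    using assms by (auto simp: bip_edges_def)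
  then show ?thesis
    unfolding component_eq_iff by (simp add: component_def)
qed

lemma mem_component_Inl_iff_Inr:
  assumes "0 < p (x, y)"
  shows "Inl x \<in> component p u \<longleftrightarrow> Inr y \<in> component p u"
  using component_Inl_eq_Inr[of p x y, OF assms] by (simp flip: component_eq_iff)

lemma component_invariant:
  assumes "\<And>x y. 0 < p (x, y) \<Longrightarrow> \<phi> (Inl x) = \<phi> (Inr y)" and "v \<in> component p u"
  shows "\<phi> u = \<phi> v"
proof -
  have "(u, v) \<in> (bip_edges p)\<^sup>*"
    using assms(2) by (simp add: component_def)
  then show ?thesis
    by induction (auto simp: bip_edges_def dest: assms(1))
qed

lemma support_factor_constant_on_component:
  assumes via_x: "\<And>x y. 0 < p (x, y) \<Longrightarrow> w x y = a x"
    and via_y: "\<And>x y. 0 < p (x, y) \<Longrightarrow> w x y = b y"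
    and "0 < p (x, y)" and "Inl x' \<in> component p (Inl x)"
  shows "a x' = w x y"
proof -
  have "case_sum a b (Inl x) = case_sum a b (Inl x')"
    using assms(4) by (rule component_invariant[where \<phi> = "case_sum a b", rotated])
      (simp add: flip: via_x via_y)
  then show ?thesis
    using via_x[OF assms(3)] by simp
qed

lemma block_scaling_eq_mass:
  fixes p :: "'a::finite \<times> 'b::finite \<Rightarrow> real"
  assumes closed: "\<And>a b. p (a, b) \<noteq> 0 \<Longrightarrow> a \<in> S \<longleftrightarrow> b \<in> T"
    and scaled: "\<And>a b. a \<in> S \<Longrightarrow> b \<in> T \<Longrightarrow>
      p (a, b) * \<kappa> = (\<Sum>b'\<in>UNIV. p (a, b')) * (\<Sum>a'\<in>UNIV. p (a', b))"
    and "(\<Sum>a\<in>S. \<Sum>b\<in>UNIV. p (a, b)) \<noteq> 0"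
  shows "\<kappa> = (\<Sum>a\<in>S. \<Sum>b\<in>UNIV. p (a, b))"
proof -
  define D where "D = (\<Sum>a\<in>S. \<Sum>b\<in>T. p (a, b))"
  have rows: "(\<Sum>b\<in>UNIV. p (a, b)) = (\<Sum>b\<in>T. p (a, b))" if "a \<in> S" for a
    using that closed by (intro sum.mono_neutral_right) auto
  have cols: "(\<Sum>a\<in>UNIV. p (a, b)) = (\<Sum>a\<in>S. p (a, b))" if "b \<in> T" for b
    using that closed by (intro sum.mono_neutral_right) auto
  have "D * \<kappa> = (\<Sum>a\<in>S. \<Sum>b\<in>T. (\<Sum>b'\<in>UNIV. p (a, b')) * (\<Sum>a'\<in>UNIV. p (a', b)))"
    by (simp add: D_def scaled sum_distrib_right)
  also have "\<dots> = (\<Sum>a\<in>S. \<Sum>b\<in>UNIV. p (a, b)) * (\<Sum>b\<in>T. \<Sum>a\<in>UNIV. p (a, b))"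
    by (simp add: sum_product)
  also have "\<dots> = D * D"
    by (simp add: D_def rows cols sum.swap[of _ S])
  finally show ?thesis
    using assms(3) by (simp add: D_def rows)
qed

lemma markov_chain_joint_Qstar_if_saturable:
  assumes "\<And>z. 0 \<le> p z" and "saturable p"
  shows "markov_chain UNIV UNIV UNIV (\<lambda>x K y. joint_Qstar p x y K)"
proof (rule markov_chain_if_cond_mutual_info_eq_0)
  show "0 \<le> joint_Qstar p x y K" for x y K
    using assms(1) by (simp add: joint_Qstar_def)
  show "cond_mutual_info UNIV UNIV UNIV (joint_Qstar p) = 0"
    using assms(2) by (simp add: saturable_def)
qed

lemma saturable_if_product_on_components:
  fixes p :: "'x::finite \<times> 'y::finite \<Rightarrow> real"
  assumes nonneg: "\<And>z. 0 \<le> p z"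
    and product: "\<And>x y. 0 < p (x, y) \<Longrightarrow>
      p (x, y) * (\<Sum>x'\<in>{x'. Inl x' \<in> component p (Inl x)}. \<Sum>y'\<in>UNIV. p (x', y')) =
      (\<Sum>y'\<in>UNIV. p (x, y')) * (\<Sum>x'\<in>UNIV. p (x', y))"
  shows "saturable p"
  unfolding saturable_def
proof (rule cond_mutual_info_eq_0_if_factorizes)
  fix x y K
  assume "0 < joint_Qstar p x y K"
  then have K: "K = component p (Inl x)" and pos: "0 < p (x, y)"
    by (auto simp: joint_Qstar_def Qstar_def split: if_splits)
  have in_K: "K = component p (Inl x') \<longleftrightarrow> Inl x' \<in> K" for x'
    by (simp add: K component_eq_iff)
  have "(\<Sum>x'\<in>UNIV. \<Sum>y'\<in>UNIV. joint_Qstar p x' y' K) =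
      (\<Sum>x'\<in>{x'. Inl x' \<in> K}. \<Sum>y'\<in>UNIV. p (x', y'))"
  proof -
    have "(\<Sum>x'\<in>UNIV. \<Sum>y'\<in>UNIV. joint_Qstar p x' y' K) =
        (\<Sum>x'\<in>UNIV. if Inl x' \<in> K then \<Sum>y'\<in>UNIV. p (x', y') else 0)"
      by (intro sum.cong refl) (simp add: joint_Qstar_def Qstar_def in_K)
    then show ?thesis
      by (simp add: sum.If_cases)
  qed
  moreover have "(\<Sum>y'\<in>UNIV. joint_Qstar p x y' K) = (\<Sum>y'\<in>UNIV. p (x, y'))"
    by (simp add: joint_Qstar_def Qstar_def K)
  moreover have "joint_Qstar p x' y K = p (x', y)" for x'
  proof (cases "0 < p (x', y)")
    case True
    then show ?thesis
      using component_Inl_eq_Inr[of p, OF pos] component_Inl_eq_Inr[of p, OF True]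
      by (simp add: joint_Qstar_def Qstar_def K)
  next
    case False
    then show ?thesis
      using nonneg[of "(x', y)"] by (simp add: joint_Qstar_def)
  qed
  ultimately show "joint_Qstar p x y K * (\<Sum>x'\<in>UNIV. \<Sum>y'\<in>UNIV. joint_Qstar p x' y' K) =
      (\<Sum>y'\<in>UNIV. joint_Qstar p x y' K) * (\<Sum>x'\<in>UNIV. joint_Qstar p x' y K)"
    using product[OF pos] by (simp add: K)
qed

lemma saturable_imp_markov_kernel:
  fixes p :: "'x::finite \<times> 'y::finite \<Rightarrow> real"
  assumes nonneg: "\<And>z. 0 \<le> p z" and "saturable p"
  shows "\<exists>n (W :: 'x \<Rightarrow> 'y \<Rightarrow> nat \<Rightarrow> real).
    (\<forall>x y q. 0 \<le> W x y q) \<and> (\<forall>x y. (\<Sum>q<n. W x y q) = 1) \<and>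
    markov_chain UNIV {..<n} UNIV (\<lambda>x q y. p (x, y) * W x y q) \<and>
    markov_chain {..<n} UNIV UNIV (\<lambda>q x y. p (x, y) * W x y q) \<and>
    markov_chain {..<n} UNIV UNIV (\<lambda>q y x. p (x, y) * W x y q)"
proof -
  obtain n and h :: "('x + 'y) set \<Rightarrow> nat" where h: "bij_betw h UNIV {..<n}"
    using ex_bij_betw_finite_nat[of "UNIV :: ('x + 'y) set set"] by (auto simp: atLeast0LessThan)
  define W :: "'x \<Rightarrow> 'y \<Rightarrow> nat \<Rightarrow> real"
    where "W x y q = (if q = h (component p (Inl x)) then 1 else 0)" for x y q
  have h_lt: "h K < n" for K
    using h by (auto simp: bij_betw_def)
  have h_eq_iff: "h K = h K' \<longleftrightarrow> K = K'" for K K'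
    using h by (auto simp: bij_betw_def inj_on_def)
  have total: "(\<Sum>q<n. W x y q) = 1" for x y
    by (simp add: W_def h_lt)
  show ?thesis
  proof (intro exI[of _ n] exI[of _ W] conjI allI)
    show "0 \<le> W x y q" for x y q
      by (simp add: W_def)
    show "(\<Sum>q<n. W x y q) = 1" for x y
      by (rule total)
    show "markov_chain UNIV {..<n} UNIV (\<lambda>x q y. p (x, y) * W x y q)"
    proof (rule markov_chain_middle_slices[OF markov_chain_joint_Qstar_if_saturable[OF assms]])
      fix q
      assume "q \<in> {..<n}"
      then obtain K where "q = h K"
        using h by (auto simp: bij_betw_def)
      then show "\<exists>K\<in>UNIV. \<forall>x y. p (x, y) * W x y q = joint_Qstar p x y K"
        by (auto simp: W_def joint_Qstar_def Qstar_def h_eq_iff)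
    qed
    show "markov_chain {..<n} UNIV UNIV (\<lambda>q x y. p (x, y) * W x y q)"
      by (rule markov_chain_kernel_iff[OF nonneg total, THEN iffD2],
          intro exI[where x = "\<lambda>x q. if q = h (component p (Inl x)) then 1 else 0"]) (simp add: W_def)
    show "markov_chain {..<n} UNIV UNIV (\<lambda>q y x. p (x, y) * W x y q)"
      by (rule markov_chain_kernel_swap_iff[OF nonneg total, THEN iffD2],
          intro exI[where x = "\<lambda>y q. if q = h (component p (Inr y)) then 1 else 0"])
        (simp add: W_def component_Inl_eq_Inr)
  qed
qed

lemma saturable_if_markov_kernel_factors:
  fixes p :: "'x::finite \<times> 'y::finite \<Rightarrow> real" and W :: "'x \<Rightarrow> 'y \<Rightarrow> nat \<Rightarrow> real"
  assumes nonneg: "\<And>z. 0 \<le> p z" and total: "\<And>x y. (\<Sum>q<n. W x y q) = 1"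
    and XQY: "markov_chain UNIV {..<n} UNIV (\<lambda>x q y. p (x, y) * W x y q)"
    and via_x: "\<And>x y q. q < n \<Longrightarrow> 0 < p (x, y) \<Longrightarrow> W x y q = A x q"
    and via_y: "\<And>x y q. q < n \<Longrightarrow> 0 < p (x, y) \<Longrightarrow> W x y q = B y q"
  shows "saturable p"
proof (rule saturable_if_product_on_components[OF nonneg])
  fix x y
  assume pos: "0 < p (x, y)"
  define S where "S = {x'. Inl x' \<in> component p (Inl x)}"
  define T where "T = {y'. Inr y' \<in> component p (Inl x)}"
  have "\<exists>q<n. W x y q \<noteq> 0"
    using total[of x y] by (metis lessThan_iff sum.neutral zero_neq_one)
  then obtain q where q: "q < n" "W x y q \<noteq> 0"
    by blast
  define g where "g = W x y q"
  have closed: "x' \<in> S \<longleftrightarrow> y' \<in> T" if "p (x', y') \<noteq> 0" for x' y'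
    using that nonneg[of "(x', y')"] mem_component_Inl_iff_Inr[of p x' y']
    by (simp add: S_def T_def less_eq_real_def)
  have weighted: "p (x', y') * W x' y' q = p (x', y') * g" if "x' \<in> S \<or> y' \<in> T" for x' y'
  proof (cases "p (x', y') = 0")
    case False
    then have "0 < p (x', y')" "x' \<in> S"
      using that closed nonneg[of "(x', y')"] by auto
    then show ?thesis
      using support_factor_constant_on_component[of p "\<lambda>x y. W x y q", OF via_x via_y pos]
        via_x[OF q(1)] by (simp add: S_def g_def q(1))
  qed simp
  define R where "R = (\<Sum>x'\<in>UNIV. \<Sum>y'\<in>UNIV. p (x', y') * W x' y' q)"
  have scaled: "p (x', y') * (R / g) = (\<Sum>y''\<in>UNIV. p (x', y'')) * (\<Sum>x''\<in>UNIV. p (x'', y'))"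
    if "x' \<in> S" "y' \<in> T" for x' y'
  proof -
    have "p (x', y') * W x' y' q * R =
        (\<Sum>y''\<in>UNIV. p (x', y'') * W x' y'' q) * (\<Sum>x''\<in>UNIV. p (x'', y') * W x'' y' q)"
      using XQY q(1) unfolding markov_chain_def R_def by blast
    then have "p (x', y') * g * R = ((\<Sum>y''\<in>UNIV. p (x', y'')) * g) * ((\<Sum>x''\<in>UNIV. p (x'', y')) * g)"
      using that by (simp add: weighted sum_distrib_right)
    then show ?thesis
      using q(2) by (simp add: g_def field_simps)
  qed
  have "x \<in> S"
    by (simp add: S_def component_def)
  then have "y \<in> T"
    using closed[of x y] pos by simp
  have "p (x, y) \<le> (\<Sum>y'\<in>UNIV. p (x, y'))"
    by (rule member_le_sum) (simp_all add: nonneg)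
  also have "\<dots> \<le> (\<Sum>x'\<in>S. \<Sum>y'\<in>UNIV. p (x', y'))"
    using \<open>x \<in> S\<close> by (intro member_le_sum) (simp_all add: nonneg sum_nonneg)
  finally have "R / g = (\<Sum>x'\<in>S. \<Sum>y'\<in>UNIV. p (x', y'))"
    using pos by (intro block_scaling_eq_mass[OF closed scaled]) auto
  then show "p (x, y) * (\<Sum>x'\<in>{x'. Inl x' \<in> component p (Inl x)}. \<Sum>y'\<in>UNIV. p (x', y')) =
      (\<Sum>y'\<in>UNIV. p (x, y')) * (\<Sum>x'\<in>UNIV. p (x', y))"
    using scaled[OF \<open>x \<in> S\<close> \<open>y \<in> T\<close>] by (simp add: S_def)
qed

lemma saturable_if_markov_kernel:
  fixes p :: "'x::finite \<times> 'y::finite \<Rightarrow> real" and W :: "'x \<Rightarrow> 'y \<Rightarrow> nat \<Rightarrow> real"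
  assumes nonneg: "\<And>z. 0 \<le> p z" and total: "\<And>x y. (\<Sum>q<n. W x y q) = 1"
    and XQY: "markov_chain UNIV {..<n} UNIV (\<lambda>x q y. p (x, y) * W x y q)"
    and QXY: "markov_chain {..<n} UNIV UNIV (\<lambda>q x y. p (x, y) * W x y q)"
    and QYX: "markov_chain {..<n} UNIV UNIV (\<lambda>q y x. p (x, y) * W x y q)"
  shows "saturable p"
proof -
  obtain A where via_x: "\<And>x y q. q < n \<Longrightarrow> 0 < p (x, y) \<Longrightarrow> W x y q = A x q"
    using QXY markov_chain_kernel_iff[where p = p and W = W, OF nonneg total] by blast
  obtain B where via_y: "\<And>x y q. q < n \<Longrightarrow> 0 < p (x, y) \<Longrightarrow> W x y q = B y q"
    using QYX markov_chain_kernel_swap_iff[where p = p and W = W, OF nonneg total] by blast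
  show ?thesis
    by (rule saturable_if_markov_kernel_factors[OF nonneg total XQY via_x via_y])
qed

theorem lemmaA1:
  fixes p :: "'x::finite \<times> 'y::finite \<Rightarrow> real"
  assumes "is_pmf p"
  shows "saturable p \<longleftrightarrow>
    (\<exists>(n::nat) (W :: 'x \<Rightarrow> 'y \<Rightarrow> nat \<Rightarrow> real).
       (\<forall>x y q. W x y q \<ge> 0) \<and> (\<forall>x y. (\<Sum>q<n. W x y q) = 1) \<and>
       (let r = (\<lambda>x y q. p (x, y) * W x y q) in
          markov_chain UNIV {..<n} UNIV (\<lambda>x q y. r x y q) \<and>
          markov_chain {..<n} UNIV UNIV (\<lambda>q x y. r x y q) \<and>
          markov_chain {..<n} UNIV UNIV (\<lambda>q y x. r x y q)))"
proof -
  have nonneg: "\<And>z. 0 \<le> p z"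
    using assms unfolding is_pmf_def by blast
  show ?thesis
    unfolding Let_def
    using saturable_imp_markov_kernel[of p, OF nonneg] saturable_if_markov_kernel[of p, OF nonneg]
    by blast
qed

end
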